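(* Let $N\ge1$, $h,\varepsilon\in(0,1)$, and let $\Phi$ be the opinion operator defined in the context. Let $P=(p_1,\dots,p_N)$ be a nondecreasing fixed point of $\Phi$ of one of the following two forms, with associated indices $a\le m$: (i) $P=(-1,\dots,-1,0,\dots,0,1,\dots,1)$ with at least one zero entry, where $a$ and $m$ are the first and last indices with $p_k=0$; (ii) there are indices $1\le a\le l<b\le m\le N$ with $p_k=-1$ for $k<a$, $-\varepsilon<p_k<0$ for $a\le k\le l$, $p_k=0$ for $l<k<b$, $0<p_k<\varepsilon$ for $b\le k\le m$, $p_k=1$ for $k>m$, $J(p_k)=\{a,\dots,m\}$ for all $k\in\{a,\dots,m\}$, and $p_a+\dots+p_m=0$. Let $\rho(V,V')=\max_{1\le k\le N}|v_k-v'_k|$ and $\Pi=\{V:\ v_a+\dots+v_m=0\}$. Then there exists $d>0$ such that, with $U=\{V:\rho(V,P)<d\}$, for every $V\in U\setminus\Pi$ with nondecreasing components there exists $n>0$ with $\Phi^n(V)\notin U$.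
   Context: For $V=(v_1,\dots,v_N)\in[-1,1]^N$ and each $k$, let $J(v_k)=\{l\in\{1,\dots,N\}:|v_l-v_k|\le\varepsilon\}$ (computed within the array $V$) and $I(v_k)=|J(v_k)|$. Put $w_k(V)=v_k+\frac{h}{I(v_k)}\sum_{l\in J(v_k)}v_l$. Then $\Phi(V)=(v_1',\dots,v_N')$ where $v_k'=-1$ if $w_k<-1$, $v_k'=1$ if $w_k>1$, and $v_k'=w_k$ if $|w_k|\le1$. *)

theory Defs
  imports Complex_Main
begin

text \<open>Opinion vectors V = (v_1,...,v_N) are functions nat => real, only indices 1..N matter.\<close>

definition Jset :: "nat \<Rightarrow> real \<Rightarrow> (nat \<Rightarrow> real) \<Rightarrow> nat \<Rightarrow> nat set" where
  "Jset N eps V k = {l \<in> {1..N}. \<bar>V l - V k\<bar> \<le> eps}"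

definition Icard :: "nat \<Rightarrow> real \<Rightarrow> (nat \<Rightarrow> real) \<Rightarrow> nat \<Rightarrow> nat" where
  "Icard N eps V k = card (Jset N eps V k)"

definition wval :: "nat \<Rightarrow> real \<Rightarrow> real \<Rightarrow> (nat \<Rightarrow> real) \<Rightarrow> nat \<Rightarrow> real" where
  "wval N h eps V k = V k + h / real (Icard N eps V k) * (\<Sum>l\<in>Jset N eps V k. V l)"

definition Phi :: "nat \<Rightarrow> real \<Rightarrow> real \<Rightarrow> (nat \<Rightarrow> real) \<Rightarrow> (nat \<Rightarrow> real)" where
  "Phi N h eps V = (\<lambda>k. if k \<in> {1..N} then
      (let w = wval N h eps V k in if w < -1 then -1 else if w > 1 then 1 else w)
    else V k)"

definition rho :: "nat \<Rightarrow> (nat \<Rightarrow> real) \<Rightarrow> (nat \<Rightarrow> real) \<Rightarrow> real" where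
  "rho N V V' = Max ((\<lambda>k. \<bar>V k - V' k\<bar>) ` {1..N})"

definition nondecr :: "nat \<Rightarrow> (nat \<Rightarrow> real) \<Rightarrow> bool" where
  "nondecr N V \<longleftrightarrow> (\<forall>i j. 1 \<le> i \<and> i \<le> j \<and> j \<le> N \<longrightarrow> V i \<le> V j)"

definition in_cube :: "nat \<Rightarrow> (nat \<Rightarrow> real) \<Rightarrow> bool" where
  "in_cube N V \<longleftrightarrow> (\<forall>k\<in>{1..N}. -1 \<le> V k \<and> V k \<le> 1)"

definition form_i :: "nat \<Rightarrow> (nat \<Rightarrow> real) \<Rightarrow> nat \<Rightarrow> nat \<Rightarrow> bool" where
  "form_i N P a m \<longleftrightarrow> 1 \<le> a \<and> a \<le> m \<and> m \<le> N \<and>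
     (\<forall>k\<in>{1..N}. (k < a \<longrightarrow> P k = -1) \<and> (a \<le> k \<and> k \<le> m \<longrightarrow> P k = 0) \<and> (m < k \<longrightarrow> P k = 1))"

definition form_ii :: "nat \<Rightarrow> real \<Rightarrow> (nat \<Rightarrow> real) \<Rightarrow> nat \<Rightarrow> nat \<Rightarrow> bool" where
  "form_ii N eps P a m \<longleftrightarrow> (\<exists>l b. 1 \<le> a \<and> a \<le> l \<and> l < b \<and> b \<le> m \<and> m \<le> N \<and>
     (\<forall>k\<in>{1..N}. (k < a \<longrightarrow> P k = -1)
        \<and> (a \<le> k \<and> k \<le> l \<longrightarrow> -eps < P k \<and> P k < 0)
        \<and> (l < k \<and> k < b \<longrightarrow> P k = 0)
        \<and> (b \<le> k \<and> k \<le> m \<longrightarrow> 0 < P k \<and> P k < eps)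
        \<and> (m < k \<longrightarrow> P k = 1))
     \<and> (\<forall>k\<in>{a..m}. Jset N eps P k = {a..m})
     \<and> (\<Sum>k=a..m. P k) = 0)"

end

theory Submission
  imports Defs
begin

text \<open>
  Close enough to P, the agents a..m form a cluster that neither sees the other agents nor
  is clipped at \<open>\<plusminus>1\<close>. While the cluster stays connected (all its opinions within eps of one
  another), every member moves by h times the cluster mean, so the cluster sum is multiplied
  by 1 + h in each step; being bounded near P, it must vanish. Once the cluster splits, the
  two sides of a gap are pushed apart by a fixed amount per step: P sums to zero over the
  cluster, so the mean seen from below the gap lies below zero by at least the smallest
  nonzero weight of P divided by the cluster size, and symmetrically above.
\<close>

lemma rho_less_iff:
  assumes "1 \<le> N"
  shows "rho N V P < d \<longleftrightarrow> (\<forall>k\<in>{1..N}. \<bar>V k - P k\<bar> < d)"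
  unfolding rho_def using assms by (subst Max_less_iff) auto

definition nbhd :: "nat set \<Rightarrow> real \<Rightarrow> (nat \<Rightarrow> real) \<Rightarrow> nat \<Rightarrow> nat set" where
  "nbhd B eps V k = {l\<in>B. \<bar>V l - V k\<bar> \<le> eps}"

lemma nbhd_uminus [simp]: "nbhd B eps (\<lambda>i. - V i) k = nbhd B eps V k"
  unfolding nbhd_def by (simp add: abs_minus_commute)

lemma card_nbhd_bounds:
  assumes "finite B" "k \<in> B" "0 \<le> eps"
  shows "1 \<le> card (nbhd B eps V k)" "card (nbhd B eps V k) \<le> card B"
proof -
  have "k \<in> nbhd B eps V k" "finite (nbhd B eps V k)" "nbhd B eps V k \<subseteq> B"
    using assms unfolding nbhd_def by auto
  then show "1 \<le> card (nbhd B eps V k)" "card (nbhd B eps V k) \<le> card B"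
    using assms(1) by (auto simp: Suc_le_eq card_gt_0_iff intro: card_mono)
qed

lemma nbhd_mean_le:
  fixes V P :: "nat \<Rightarrow> real"
  assumes B: "finite B" "sum P B = 0"
    and close: "\<And>i. i \<in> B \<Longrightarrow> \<bar>V i - P i\<bar> < d"
    and bounded: "\<And>i. i \<in> B \<Longrightarrow> \<bar>P i\<bar> \<le> eta" and d_eta: "2 * d \<le> eps - eta"
    and nu: "0 \<le> nu" "\<And>i. i \<in> B \<Longrightarrow> P i \<noteq> 0 \<Longrightarrow> nu \<le> \<bar>P i\<bar>"
    and jk: "j \<in> B" "k \<in> B" "eps < V j - V k"
  shows "sum V (nbhd B eps V k) / card (nbhd B eps V k) \<le> d - nu / card B"
proof -
  define J where "J = nbhd B eps V k"
  have "0 \<le> eps"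
    using d_eta bounded[OF jk(1)] close[OF jk(1)] abs_ge_zero[of "P j"] abs_ge_zero[of "V j - P j"]
    by linarith
  then have card_J: "1 \<le> card J" "card J \<le> card B" and "J \<subseteq> B"
    using card_nbhd_bounds[OF B(1) jk(2)] unfolding J_def nbhd_def by auto
  have Pk_neg: "P k < 0" and Pj_pos: "0 < P j"
    using jk close[of j] close[of k] bounded[of j] bounded[of k] d_eta by (auto simp: abs_le_iff abs_less_iff)
  txt \<open>Everything outside the neighbourhood of k lies above it and so carries a nonnegative
    weight; as the weights sum to zero, those inside sum to at most \<open>-P j\<close>.\<close>
  have outside_nonneg: "0 \<le> P i" if "i \<in> B - J" for i
  proof -
    have "eps < \<bar>V i - V k\<bar>" using that unfolding J_def nbhd_def by auto
    then show ?thesis using that jk(2) close[of i] close[of k] bounded[of i] bounded[of k] Pk_neg d_eta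
      by (auto simp: abs_le_iff abs_less_iff abs_if split: if_splits)
  qed
  have "j \<in> B - J" using jk unfolding J_def nbhd_def by auto
  then have "P j \<le> sum P (B - J)"
    using B(1) outside_nonneg by (intro member_le_sum) auto
  moreover have "nu \<le> P j" using nu(2)[OF jk(1)] Pj_pos by simp
  moreover have "sum P B = sum P J + sum P (B - J)"
    using sum.subset_diff[OF \<open>J \<subseteq> B\<close> B(1)] by (simp add: add.commute)
  ultimately have sum_P: "sum P J \<le> - nu" using B(2) by linarith
  have "sum V J - sum P J = (\<Sum>i\<in>J. V i - P i)" by (simp add: sum_subtractf)
  also have "\<dots> \<le> (\<Sum>i\<in>J. d)"
    using close \<open>J \<subseteq> B\<close> by (intro sum_mono) (force simp: abs_less_iff)
  finally have "sum V J \<le> - nu + card J * d" using sum_P by simp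
  then have "sum V J / card J \<le> (- nu + card J * d) / card J"
    using card_J by (intro divide_right_mono) auto
  also have "\<dots> = d - nu / card J" using card_J by (simp add: field_simps)
  also have "\<dots> \<le> d - nu / card B" using card_J nu(1) by (simp add: frac_le)
  finally show ?thesis unfolding J_def .
qed

locale isolated_cluster =
  fixes N a m :: nat and h eps :: real and P :: "nat \<Rightarrow> real"
  assumes cluster_bounds: "1 \<le> a" "a \<le> m" "m \<le> N"
    and h_pos: "0 < h" and eps_pos: "0 < eps" and eps_less_1: "eps < 1"
    and cluster_separated: "\<And>k l. k \<in> {a..m} \<Longrightarrow> l \<in> {1..N} - {a..m} \<Longrightarrow> eps < \<bar>P l - P k\<bar>"
    and cluster_small: "\<And>k. k \<in> {a..m} \<Longrightarrow> \<bar>P k\<bar> < eps"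
    and cluster_sum: "(\<Sum>k=a..m. P k) = 0"
begin

definition cluster_max :: real where
  "cluster_max = Max ((\<lambda>k. \<bar>P k\<bar>) ` {a..m})"

text \<open>The inserted 1 keeps the minimum defined when the whole cluster sits at 0.\<close>
definition cluster_min_nonzero :: real where
  "cluster_min_nonzero = Min (insert 1 ((\<lambda>k. \<bar>P k\<bar>) ` {k\<in>{a..m}. P k \<noteq> 0}))"

lemma cluster_max_less_eps: "cluster_max < eps"
  unfolding cluster_max_def using cluster_small cluster_bounds by (subst Max_less_iff) auto

lemma abs_le_cluster_max: "k \<in> {a..m} \<Longrightarrow> \<bar>P k\<bar> \<le> cluster_max"
  unfolding cluster_max_def by auto

lemma cluster_min_nonzero_pos: "0 < cluster_min_nonzero"
  unfolding cluster_min_nonzero_def by (subst Min_gr_iff) auto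

lemma cluster_min_nonzero_le: "k \<in> {a..m} \<Longrightarrow> P k \<noteq> 0 \<Longrightarrow> cluster_min_nonzero \<le> \<bar>P k\<bar>"
  unfolding cluster_min_nonzero_def by (auto intro: Min_le)

end

text \<open>The constraints on d: separation keeps the neighbourhoods of cluster members inside the
  cluster, \<open>d_clip\<close> rules out clipping, and the last two make a split cluster drift apart.\<close>
locale cluster_neighbourhood = isolated_cluster +
  fixes d :: real
  assumes d_pos: "0 < d"
    and d_separation: "\<And>k l. k \<in> {a..m} \<Longrightarrow> l \<in> {1..N} - {a..m} \<Longrightarrow> eps + 2 * d < \<bar>P l - P k\<bar>"
    and d_cluster_max: "2 * d \<le> eps - cluster_max"
    and d_clip: "d \<le> 1 - cluster_max"
    and d_min_nonzero: "2 * card {a..m} * d \<le> cluster_min_nonzero"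

context isolated_cluster
begin

lemma cluster_neighbourhood_exists: "\<exists>d. cluster_neighbourhood N a m h eps P d"
proof -
  define sep where
    "sep = Min (insert 1 ((\<lambda>(k, l). \<bar>P l - P k\<bar> - eps) ` ({a..m} \<times> ({1..N} - {a..m}))))"
  have sep_pos: "0 < sep" unfolding sep_def using cluster_separated by (subst Min_gr_iff) auto
  have sep_le: "sep \<le> \<bar>P l - P k\<bar> - eps" if "k \<in> {a..m}" "l \<in> {1..N} - {a..m}" for k l
    unfolding sep_def using that by (intro Min_le) force+
  define d where
    "d = min (sep / 4) (min ((eps - cluster_max) / 2) (min (1 - cluster_max)
           (cluster_min_nonzero / (2 * real (card {a..m})))))"
  have d_le: "d \<le> sep / 4" "d \<le> (eps - cluster_max) / 2" "d \<le> 1 - cluster_max"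
    "d \<le> cluster_min_nonzero / (2 * real (card {a..m}))"
    unfolding d_def by (meson min.cobounded1 min.cobounded2 order_trans)+
  have card_pos: "0 < real (card {a..m})" using cluster_bounds by simp
  have "0 < d"
    unfolding d_def using sep_pos cluster_max_less_eps eps_less_1 cluster_min_nonzero_pos card_pos
    by (simp del: card_atLeastAtMost)
  moreover have "2 * card {a..m} * d \<le> cluster_min_nonzero"
    using d_le(4) card_pos by (simp add: le_divide_eq mult.commute del: card_atLeastAtMost)
  moreover have "eps + 2 * d < \<bar>P l - P k\<bar>" if "k \<in> {a..m}" "l \<in> {1..N} - {a..m}" for k l
    using sep_le[OF that] sep_pos d_le(1) by linarith
  ultimately have "cluster_neighbourhood N a m h eps P d"
    using d_le(2,3) by unfold_locales (auto simp: field_simps)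
  then show ?thesis ..
qed

end

context cluster_neighbourhood
begin

definition near :: "(nat \<Rightarrow> real) \<Rightarrow> bool" where
  "near V \<longleftrightarrow> (\<forall>i\<in>{1..N}. \<bar>V i - P i\<bar> < d)"

lemma near_on_cluster: "near V \<Longrightarrow> k \<in> {a..m} \<Longrightarrow> \<bar>V k - P k\<bar> < d"
  unfolding near_def using cluster_bounds by auto

lemma Jset_eq_nbhd:
  assumes "near V" "k \<in> {a..m}"
  shows "Jset N eps V k = nbhd {a..m} eps V k"
proof -
  have "l \<in> {a..m}" if "l \<in> {1..N}" "\<bar>V l - V k\<bar> \<le> eps" for l
  proof (rule ccontr)
    assume "l \<notin> {a..m}"
    then have "eps + 2 * d < \<bar>P l - P k\<bar>" using d_separation assms(2) that(1) by blast
    moreover have "\<bar>V l - P l\<bar> < d" "\<bar>V k - P k\<bar> < d"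
      using assms that(1) near_on_cluster unfolding near_def by auto
    ultimately show False using that(2) by linarith
  qed
  then show ?thesis unfolding Jset_def nbhd_def using cluster_bounds by auto
qed

lemma Phi_on_cluster:
  assumes "near V" "near (Phi N h eps V)" "k \<in> {a..m}"
  shows "Phi N h eps V k = V k + h * (sum V (nbhd {a..m} eps V k) / card (nbhd {a..m} eps V k))"
proof -
  have k: "k \<in> {1..N}" using assms(3) cluster_bounds by auto
  have w: "wval N h eps V k = V k + h * (sum V (nbhd {a..m} eps V k) / card (nbhd {a..m} eps V k))"
    unfolding wval_def Icard_def Jset_eq_nbhd[OF assms(1,3)] by simp
  have "\<bar>Phi N h eps V k\<bar> < 1"
    using near_on_cluster[OF assms(2,3)] abs_le_cluster_max[OF assms(3)] d_clip by linarith
  then show ?thesis using k unfolding w[symmetric] Phi_def Let_def by (auto split: if_splits)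
qed

lemma sum_Phi_connected:
  assumes "near V" "near (Phi N h eps V)"
    and connected: "\<And>k l. k \<in> {a..m} \<Longrightarrow> l \<in> {a..m} \<Longrightarrow> \<bar>V l - V k\<bar> \<le> eps"
  shows "(\<Sum>k=a..m. Phi N h eps V k) = (1 + h) * (\<Sum>k=a..m. V k)"
proof -
  have "nbhd {a..m} eps V k = {a..m}" if "k \<in> {a..m}" for k
    using connected that unfolding nbhd_def by auto
  then have "(\<Sum>k=a..m. Phi N h eps V k) = (\<Sum>k=a..m. V k + h * ((\<Sum>l=a..m. V l) / card {a..m}))"
    using Phi_on_cluster[OF assms(1,2)] by (intro sum.cong) auto
  also have "\<dots> = (1 + h) * (\<Sum>k=a..m. V k)"
    using cluster_bounds by (simp add: sum.distrib algebra_simps del: card_atLeastAtMost)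
  finally show ?thesis .
qed

lemma gap_Phi_increase:
  assumes "near V" "near (Phi N h eps V)" "j \<in> {a..m}" "k \<in> {a..m}" "eps < V j - V k"
  shows "V j - V k + h * cluster_min_nonzero / card {a..m} \<le> Phi N h eps V j - Phi N h eps V k"
proof -
  let ?mean = "\<lambda>V i. sum V (nbhd {a..m} eps V i) / card (nbhd {a..m} eps V i)"
  let ?nu = cluster_min_nonzero and ?c = "real (card {a..m})"
  have lower: "?mean V k \<le> d - ?nu / ?c"
    using assms near_on_cluster cluster_sum abs_le_cluster_max d_cluster_max
      cluster_min_nonzero_pos cluster_min_nonzero_le
    by (intro nbhd_mean_le[where P = P and eta = cluster_max]) (auto intro: less_imp_le)
  have "?mean (\<lambda>i. - V i) j \<le> d - ?nu / ?c"
    using assms near_on_cluster[of V] cluster_sum abs_le_cluster_max d_cluster_max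
      cluster_min_nonzero_pos cluster_min_nonzero_le
    by (intro nbhd_mean_le[where P = "\<lambda>i. - P i" and eta = cluster_max])
      (auto simp: sum_negf abs_minus_commute intro: less_imp_le)
  then have upper: "?nu / ?c - d \<le> ?mean V j" by (simp add: sum_negf)
  have "2 * d \<le> ?nu / ?c" using d_min_nonzero cluster_bounds by (simp add: field_simps)
  then have "?nu / ?c \<le> ?mean V j - ?mean V k" using lower upper by linarith
  then have "h * ?nu / ?c \<le> h * (?mean V j - ?mean V k)"
    using h_pos mult_left_mono[of _ _ h] by fastforce
  then show ?thesis
    using Phi_on_cluster[OF assms(1,2,3)] Phi_on_cluster[OF assms(1,2,4)] by (simp add: algebra_simps)
qed

lemma cluster_sum_bound:
  assumes "near V"
  shows "\<bar>\<Sum>k=a..m. V k\<bar> \<le> card {a..m} * d"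
proof -
  have "(\<Sum>k=a..m. V k) = (\<Sum>k=a..m. V k - P k)" using cluster_sum by (simp add: sum_subtractf)
  then have "\<bar>\<Sum>k=a..m. V k\<bar> \<le> (\<Sum>k=a..m. \<bar>V k - P k\<bar>)" by (metis sum_abs)
  also have "\<dots> \<le> (\<Sum>k=a..m. d)"
    using near_on_cluster[OF assms] by (intro sum_mono) (auto intro: less_imp_le)
  finally show ?thesis by simp
qed

lemma orbit_connected:
  assumes near_orbit: "\<And>n. near ((Phi N h eps ^^ n) V)" and "k \<in> {a..m}" "l \<in> {a..m}"
  shows "\<bar>(Phi N h eps ^^ n) V l - (Phi N h eps ^^ n) V k\<bar> \<le> eps"
proof (rule ccontr)
  define X where "X n = (Phi N h eps ^^ n) V" for n
  define c where "c = h * cluster_min_nonzero / card {a..m}"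
  have c_pos: "0 < c" unfolding c_def using h_pos cluster_min_nonzero_pos cluster_bounds by simp
  assume "\<not> ?thesis"
  then obtain j i where ji: "j \<in> {a..m}" "i \<in> {a..m}" "eps < X n j - X n i"
    using assms(2,3) by (cases "X n l \<le> X n k") (auto simp: X_def abs_if split: if_splits)
  have grows: "X n j - X n i + t * c \<le> X (n + t) j - X (n + t) i" for t
  proof (induction t)
    case (Suc t)
    have "0 \<le> t * c" using c_pos by simp
    then have "eps < X (n + t) j - X (n + t) i" using Suc ji(3) by linarith
    then have "X (n + t) j - X (n + t) i + c \<le> X (n + Suc t) j - X (n + Suc t) i"
      using gap_Phi_increase[OF near_orbit near_orbit[of "Suc (n + t)", simplified] ji(1,2)]
      unfolding X_def c_def by simp
    then show ?case using Suc by (simp add: algebra_simps)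
  qed simp
  have bounded: "X t j - X t i \<le> 2 * eps" for t
    using near_on_cluster[OF near_orbit[of t] ji(1)] near_on_cluster[OF near_orbit[of t] ji(2)]
      abs_le_cluster_max[OF ji(1)] abs_le_cluster_max[OF ji(2)] d_cluster_max
    unfolding X_def by (auto simp: abs_le_iff abs_less_iff)
  obtain t :: nat where "2 * eps < t * c" using ex_less_of_nat_mult[OF c_pos] by blast
  then show False using grows[of t] bounded[of "n + t"] ji(3) eps_pos by linarith
qed

lemma orbit_cluster_sum:
  assumes near_orbit: "\<And>n. near ((Phi N h eps ^^ n) V)"
  shows "(\<Sum>k=a..m. (Phi N h eps ^^ n) V k) = (1 + h) ^ n * (\<Sum>k=a..m. V k)"
proof (induction n)
  case (Suc n)
  then show ?case
    using sum_Phi_connected[OF near_orbit near_orbit[of "Suc n", simplified]]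
      orbit_connected[OF near_orbit]
    by simp
qed simp

lemma orbit_leaves_near:
  assumes "near V" "(\<Sum>k=a..m. V k) \<noteq> 0"
  shows "\<exists>n>0. \<not> near ((Phi N h eps ^^ n) V)"
proof (rule ccontr)
  assume "\<not> ?thesis"
  then have near_orbit: "near ((Phi N h eps ^^ n) V)" for n
    using assms(1) by (cases n) auto
  define s where "s = \<bar>\<Sum>k=a..m. V k\<bar>"
  have "0 < s" using assms(2) unfolding s_def by simp
  obtain n where "card {a..m} * d / s < (1 + h) ^ n" using real_arch_pow h_pos by force
  then have "card {a..m} * d < (1 + h) ^ n * s" using \<open>0 < s\<close> by (simp add: divide_less_eq)
  also have "\<dots> = \<bar>\<Sum>k=a..m. (Phi N h eps ^^ n) V k\<bar>"
    unfolding orbit_cluster_sum[OF near_orbit] s_def using h_pos by (simp add: abs_mult)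
  finally show False using cluster_sum_bound[OF near_orbit[of n]] by linarith
qed

end

lemma form_i_isolated_cluster:
  assumes "form_i N P a m" "0 < h" "0 < eps" "eps < 1"
  shows "isolated_cluster N a m h eps P"
proof -
  have bounds: "1 \<le> a" "a \<le> m" "m \<le> N" using assms(1) unfolding form_i_def by auto
  have zero: "P k = 0" if "k \<in> {a..m}" for k using assms(1) that bounds unfolding form_i_def by auto
  have one: "\<bar>P l\<bar> = 1" if "l \<in> {1..N} - {a..m}" for l
    using assms(1) that unfolding form_i_def by (cases "l < a") auto
  show ?thesis using bounds zero one assms(2-4) by unfold_locales auto
qed

lemma form_ii_isolated_cluster:
  assumes "form_ii N eps P a m" "0 < h" "0 < eps" "eps < 1"
  shows "isolated_cluster N a m h eps P"
proof -
  obtain l b where lb: "1 \<le> a" "a \<le> l" "l < b" "b \<le> m" "m \<le> N"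
    and P_values: "\<forall>k\<in>{1..N}. (k < a \<longrightarrow> P k = -1)
        \<and> (a \<le> k \<and> k \<le> l \<longrightarrow> -eps < P k \<and> P k < 0)
        \<and> (l < k \<and> k < b \<longrightarrow> P k = 0)
        \<and> (b \<le> k \<and> k \<le> m \<longrightarrow> 0 < P k \<and> P k < eps)
        \<and> (m < k \<longrightarrow> P k = 1)"
    and J: "\<forall>k\<in>{a..m}. Jset N eps P k = {a..m}" and sum: "(\<Sum>k=a..m. P k) = 0"
    using assms(1) unfolding form_ii_def by blast
  have "eps < \<bar>P l' - P k\<bar>" if "k \<in> {a..m}" "l' \<in> {1..N} - {a..m}" for k l'
  proof -
    have "l' \<notin> Jset N eps P k" using J that by blast
    then show ?thesis using that unfolding Jset_def by auto
  qed
  moreover have "\<bar>P k\<bar> < eps" if "k \<in> {a..m}" for k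
    using P_values that lb assms(3) by (cases "k \<le> l"; cases "k < b") (auto simp: abs_if)
  ultimately show ?thesis using lb sum assms(2-4) by unfold_locales simp_all
qed

theorem theorem3:
  fixes N a m :: nat and h eps :: real and P :: "nat \<Rightarrow> real"
  assumes "N \<ge> 1" and "0 < h" "h < 1" and "0 < eps" "eps < 1"
    and "\<forall>k\<in>{1..N}. Phi N h eps P k = P k"
    and "nondecr N P"
    and "form_i N P a m \<or> form_ii N eps P a m"
  shows "\<exists>d>0. \<forall>V. in_cube N V \<and> nondecr N V \<and> rho N V P < d \<and> (\<Sum>k=a..m. V k) \<noteq> 0
           \<longrightarrow> (\<exists>n>0. \<not> rho N ((Phi N h eps ^^ n) V) P < d)"
proof -
  have "isolated_cluster N a m h eps P"
    using assms(8) form_i_isolated_cluster[OF _ assms(2,4,5)] form_ii_isolated_cluster[OF _ assms(2,4,5)]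
    by blast
  then interpret isolated_cluster N a m h eps P .
  obtain d where "cluster_neighbourhood N a m h eps P d" using cluster_neighbourhood_exists ..
  then interpret cluster_neighbourhood N a m h eps P d .
  have near_iff: "rho N V P < d \<longleftrightarrow> near V" for V
    unfolding near_def using rho_less_iff[OF assms(1)] .
  show ?thesis
  proof (intro exI[of _ d] conjI allI impI d_pos)
    fix V
    assume "in_cube N V \<and> nondecr N V \<and> rho N V P < d \<and> (\<Sum>k=a..m. V k) \<noteq> 0"
    then show "\<exists>n>0. \<not> rho N ((Phi N h eps ^^ n) V) P < d"
      unfolding near_iff using orbit_leaves_near by blast
  qed
qed

end
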